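(* Consider the ODE system $S_h'=\Lambda_h-\beta_vI_vS_h-\mu_hS_h$, $I_h'=\beta_vI_vS_h-(\mu_h+\delta+r_1)I_h$, $R_h'=r_1I_h-\mu_hR_h$, $S_v'=\Lambda_v-\beta_hS_vI_h-\mu_vS_v$, $I_v'=\beta_hS_vI_h-\mu_vI_v$, with constant parameters $\Lambda_h,\Lambda_v,\mu_h,\mu_v>0$ and $\beta_h,\beta_v,\delta,r_1\geq0$, and let $\mathcal{R}_0=\sqrt{\frac{\beta_hS_v^0}{\mu_h+\delta+r_1}\cdot\frac{\beta_vS_h^0}{\mu_v}}$ with $S_v^0=\Lambda_v/\mu_v$, $S_h^0=\Lambda_h/\mu_h$. Assume $\mathcal{R}_0>1$. Then the unique endemic equilibrium $E^*$ (the unique nonnegative equilibrium other than $(S_h^0,0,0,S_v^0,0)$) is locally asymptotically stable.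
   Context: This ODE is the age-integrated version of an age-structured malaria model in the case without loss of immunity ($r_2=0$) and with age-independent parameters. *)

theory Defs
  imports "HOL-Analysis.Analysis"
begin

type_synonym state = "real \<times> real \<times> real \<times> real \<times> real"
  (* (S_h, I_h, R_h, S_v, I_v) *)

definition malaria_field ::
  "real \<Rightarrow> real \<Rightarrow> real \<Rightarrow> real \<Rightarrow> real \<Rightarrow> real \<Rightarrow> real \<Rightarrow> real \<Rightarrow> state \<Rightarrow> state" where
  "malaria_field Lh Lv muh muv bh bv dl r1 =
     (\<lambda>(Sh, Ih, Rh, Sv, Iv).
        (Lh - bv * Iv * Sh - muh * Sh,
         bv * Iv * Sh - (muh + dl + r1) * Ih,
         r1 * Ih - muh * Rh,
         Lv - bh * Sv * Ih - muv * Sv,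
         bh * Sv * Ih - muv * Iv))"

definition R0 :: "real \<Rightarrow> real \<Rightarrow> real \<Rightarrow> real \<Rightarrow> real \<Rightarrow> real \<Rightarrow> real \<Rightarrow> real \<Rightarrow> real" where
  "R0 Lh Lv muh muv bh bv dl r1 =
     sqrt ((bh * (Lv / muv)) / (muh + dl + r1) * ((bv * (Lh / muh)) / muv))"

definition disease_free_eq :: "real \<Rightarrow> real \<Rightarrow> real \<Rightarrow> real \<Rightarrow> state" where
  "disease_free_eq Lh Lv muh muv = (Lh / muh, 0, 0, Lv / muv, 0)"

definition nonneg_state :: "state \<Rightarrow> bool" where
  "nonneg_state = (\<lambda>(Sh, Ih, Rh, Sv, Iv). Sh \<ge> 0 \<and> Ih \<ge> 0 \<and> Rh \<ge> 0 \<and> Sv \<ge> 0 \<and> Iv \<ge> 0)"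

definition is_solution :: "('a::real_normed_vector \<Rightarrow> 'a) \<Rightarrow> (real \<Rightarrow> 'a) \<Rightarrow> bool" where
  "is_solution f x \<longleftrightarrow> (\<forall>t\<ge>0. (x has_vector_derivative f (x t)) (at t within {0..}))"

definition loc_asym_stable :: "('a::real_normed_vector \<Rightarrow> 'a) \<Rightarrow> 'a \<Rightarrow> bool" where
  "loc_asym_stable f e \<longleftrightarrow>
     f e = 0 \<and>
     (\<forall>\<epsilon>>0. \<exists>\<delta>>0. \<forall>x. is_solution f x \<and> dist (x 0) e < \<delta> \<longrightarrow> (\<forall>t\<ge>0. dist (x t) e < \<epsilon>)) \<and>
     (\<exists>\<eta>>0. \<forall>x. is_solution f x \<and> dist (x 0) e < \<eta> \<longrightarrow> (x \<longlongrightarrow> e) at_top)"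

end

theory Submission
  imports Defs
begin

text \<open>
  Write the endemic equilibrium as \<open>(Sh, Ih, Rh, Sv, Iv)\<close> and measure a state by its relative
  deviations \<open>x1, x2, x3, x4\<close> in \<open>Sh, Ih, Sv, Iv\<close> and its absolute deviation \<open>z\<close> in \<open>Rh\<close>.
  In these coordinates the field is polynomial, with the rates \<open>p = bv * Iv\<close>, \<open>q = bh * Ih\<close>
  and \<open>a = muh + dl + r1\<close>. For the quadratic form \<open>x1\<^sup>2/p + x2\<^sup>2/a + x3\<^sup>2/q + x4\<^sup>2/muv\<close> the
  quadratic part of the derivative along the flow is
  \<open>- 2 (muh/p) x1\<^sup>2 - 2 (muv/q) x3\<^sup>2 - x1\<^sup>2 - x3\<^sup>2 - (x1 + x4 - x2)\<^sup>2 - (x3 + x2 - x4)\<^sup>2\<close>,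
  which is negative semidefinite but vanishes on the line \<open>x1 = x3 = 0, x2 = x4\<close>. Adding a
  small cross term \<open>\<epsilon> x1 x4\<close> and a small multiple \<open>\<beta> z\<^sup>2\<close> makes the derivative negative
  definite, and near the equilibrium the cubic terms are dominated. A Lyapunov function that is
  squeezed between two multiples of the squared distance and satisfies \<open>V' \<le> - c V\<close> forces
  exponential convergence, hence local asymptotic stability.

  The equilibrium equations reduce to a linear equation for \<open>Ih\<close> whose right-hand side
  \<open>bh bv Lh Lv - (muh + dl + r1) muh muv\<^sup>2\<close> is positive exactly when \<open>R0 > 1\<close>; this gives
  existence and uniqueness of the endemic equilibrium.
\<close>

section \<open>Lyapunov functions\<close>

lemma solution_continuous_on:
  assumes "is_solution f x"
  shows "continuous_on {0..} x"
  using assms unfolding is_solution_def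
  by (auto intro!: continuous_on_vector_derivative)

lemma exp_weighted_Lyapunov_le:
  fixes f :: "'a::real_normed_vector \<Rightarrow> 'a" and V :: "'a \<Rightarrow> real"
  assumes sol: "is_solution f x"
    and V_deriv: "\<And>y. (V has_derivative DV y) (at y)"
    and decr: "\<And>s. 0 < s \<Longrightarrow> s < t \<Longrightarrow> DV (x s) (f (x s)) \<le> - c * V (x s)"
    and "t > 0"
  shows "exp (c * t) * V (x t) \<le> V (x 0)"
proof -
  define h where "h s = exp (c * s) * V (x s)" for s
  have "continuous_on {0..t} (\<lambda>s. V (x s))"
    using continuous_on_subset[OF solution_continuous_on[OF sol]]
      has_derivative_continuous_on[OF V_deriv]
    by (auto intro: continuous_on_compose2[of UNIV V])
  then have h_cont: "continuous_on {0..t} h"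
    unfolding h_def by (intro continuous_intros)
  have h_deriv: "(h has_real_derivative exp (c * s) * (c * V (x s) + DV (x s) (f (x s)))) (at s)"
    if "0 < s" for s
  proof -
    have "(x has_vector_derivative f (x s)) (at s within {0<..})"
      by (rule has_vector_derivative_within_subset[of _ _ _ "{0..}"])
        (use sol that in \<open>auto simp: is_solution_def\<close>)
    then have "(x has_derivative (\<lambda>u. u *\<^sub>R f (x s))) (at s)"
      using that at_within_open[of s "{0<..}"] by (simp add: has_vector_derivative_def)
    from has_derivative_compose[OF this V_deriv]
    have "((\<lambda>s. V (x s)) has_real_derivative DV (x s) (f (x s))) (at s)"
      using linear_scale[OF has_derivative_linear[OF V_deriv]]
      by (simp add: has_field_derivative_def mult_commute_abs)
    then show ?thesis
      unfolding h_def by (auto intro!: derivative_eq_intros simp: algebra_simps)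
  qed
  obtain l s where s: "0 < s" "s < t" and "DERIV h s :> l" and h_diff: "h t - h 0 = (t - 0) * l"
    using MVT[OF \<open>t > 0\<close> h_cont] h_deriv real_differentiable_def by meson
  then have "l = exp (c * s) * (c * V (x s) + DV (x s) (f (x s)))"
    using DERIV_unique h_deriv by blast
  also have "\<dots> \<le> 0"
    using decr[OF s] by (simp add: mult_nonneg_nonpos)
  finally have "t * l \<le> 0"
    using \<open>t > 0\<close> by (simp add: mult_nonneg_nonpos)
  then show ?thesis
    using h_diff by (simp add: h_def)
qed

lemma Lyapunov_sublevel_exp_bound:
  fixes f :: "'a::real_normed_vector \<Rightarrow> 'a" and V :: "'a \<Rightarrow> real"
  assumes sol: "is_solution f x"
    and V_deriv: "\<And>y. (V has_derivative DV y) (at y)"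
    and V_nonneg: "\<And>y. 0 \<le> V y"
    and decr: "\<And>y. V y < \<rho> \<Longrightarrow> DV y (f y) \<le> - c * V y"
    and "0 \<le> c" and "V (x 0) < \<rho>" and "0 \<le> t"
  shows "exp (c * t) * V (x t) \<le> V (x 0)"
proof -
  have bound: "exp (c * s) * V (x s) \<le> V (x 0)"
    if "0 \<le> s" "\<And>u. 0 < u \<Longrightarrow> u < s \<Longrightarrow> V (x u) < \<rho>" for s
    using that exp_weighted_Lyapunov_le[OF sol V_deriv, of s c] decr
    by (cases "s = 0") auto
  have stays: "V (x s) < \<rho>" if "0 \<le> s" for s
  proof (rule ccontr)
    assume "\<not> V (x s) < \<rho>"
    \<comment> \<open>consider the first time the solution leaves the sublevel set\<close>
    define A where "A = {0..s} \<inter> (\<lambda>u. V (x u)) -` {\<rho>..}"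
    have "continuous_on {0..s} (\<lambda>u. V (x u))"
      using continuous_on_subset[OF solution_continuous_on[OF sol]]
        has_derivative_continuous_on[OF V_deriv]
      by (auto intro: continuous_on_compose2[of UNIV V])
    then have "closed A"
      unfolding A_def by (intro continuous_closed_preimage) auto
    moreover have "s \<in> A" "bdd_below A"
      using \<open>0 \<le> s\<close> \<open>\<not> V (x s) < \<rho>\<close> by (auto simp: A_def intro: bdd_belowI[of _ 0])
    ultimately have T: "Inf A \<in> A"
      using closed_contains_Inf by blast
    have "V (x u) < \<rho>" if "0 < u" "u < Inf A" for u
      using T that cInf_lower[OF _ \<open>bdd_below A\<close>, of u] by (force simp: A_def)
    then have "exp (c * Inf A) * V (x (Inf A)) \<le> V (x 0)"
      using T by (intro bound) (auto simp: A_def)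
    moreover have "V (x (Inf A)) \<le> exp (c * Inf A) * V (x (Inf A))"
      using V_nonneg[of "x (Inf A)"] T \<open>0 \<le> c\<close> by (simp add: A_def mult_le_cancel_right1)
    ultimately show False
      using T \<open>V (x 0) < \<rho>\<close> by (simp add: A_def)
  qed
  show ?thesis
    using bound stays \<open>0 \<le> t\<close> by simp
qed

lemma exp_decay_imp_loc_asym_stable:
  fixes f :: "'a::real_normed_vector \<Rightarrow> 'a"
  assumes "f e = 0" and "0 < d" "0 < K" "0 < c"
    and decay: "\<And>x t. is_solution f x \<Longrightarrow> dist (x 0) e < d \<Longrightarrow> 0 \<le> t \<Longrightarrow>
                  dist (x t) e \<le> K * exp (- c * t) * dist (x 0) e"
  shows "loc_asym_stable f e"
  unfolding loc_asym_stable_def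
proof (intro conjI allI impI)
  show "\<exists>\<delta>>0. \<forall>x. is_solution f x \<and> dist (x 0) e < \<delta> \<longrightarrow> (\<forall>t\<ge>0. dist (x t) e < \<epsilon>)"
    if "\<epsilon> > 0" for \<epsilon>
  proof (intro exI[of _ "min d (\<epsilon> / K)"] conjI allI impI)
    fix x and t :: real assume x: "is_solution f x \<and> dist (x 0) e < min d (\<epsilon> / K)" and "0 \<le> t"
    then have "dist (x t) e \<le> K * exp (- c * t) * dist (x 0) e"
      by (intro decay) auto
    also have "\<dots> \<le> K * dist (x 0) e"
      using \<open>0 \<le> t\<close> \<open>0 < c\<close> \<open>0 < K\<close> by (intro mult_right_mono mult_right_le_one_le) simp_all
    also have "\<dots> < \<epsilon>"
      using x \<open>0 < K\<close> by (simp add: field_simps)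
    finally show "dist (x t) e < \<epsilon>" .
  qed (use \<open>0 < d\<close> \<open>0 < K\<close> that in auto)
  show "\<exists>\<eta>>0. \<forall>x. is_solution f x \<and> dist (x 0) e < \<eta> \<longrightarrow> (x \<longlongrightarrow> e) at_top"
  proof (intro exI[of _ d] conjI allI impI)
    fix x assume x: "is_solution f x \<and> dist (x 0) e < d"
    have "((\<lambda>t. exp (- c * t)) \<longlongrightarrow> 0) at_top"
      using \<open>0 < c\<close>
      by (intro filterlim_compose[OF exp_at_bot] filterlim_tendsto_neg_mult_at_bot[OF tendsto_const]
          filterlim_ident) auto
    then have lim: "((\<lambda>t. K * exp (- c * t) * dist (x 0) e) \<longlongrightarrow> 0) at_top"
      using tendsto_mult[OF tendsto_mult[OF tendsto_const] tendsto_const] by fastforce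
    have ev: "\<forall>\<^sub>F t in at_top. dist (x t) e \<le> K * exp (- c * t) * dist (x 0) e"
      using x decay by (intro eventually_at_top_linorderI[of 0]) blast
    have "((\<lambda>t. dist (x t) e) \<longlongrightarrow> 0) at_top"
      by (rule tendsto_sandwich[OF always_eventually ev tendsto_const lim]) simp
    then show "(x \<longlongrightarrow> e) at_top"
      using tendsto_dist_iff by blast
  qed (use \<open>0 < d\<close> in simp)
qed (use assms in simp)

lemma quadratic_Lyapunov_imp_loc_asym_stable:
  fixes f :: "'a::real_normed_vector \<Rightarrow> 'a" and V :: "'a \<Rightarrow> real"
  assumes "f e = 0"
    and V_deriv: "\<And>y. (V has_derivative DV y) (at y)"
    and V_lower: "\<And>y. m * (dist y e)\<^sup>2 \<le> V y"
    and V_upper: "\<And>y. V y \<le> M * (dist y e)\<^sup>2"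
    and decr: "\<And>y. dist y e < r \<Longrightarrow> DV y (f y) \<le> - c * V y"
    and "0 < m" "0 < M" "0 < r" "0 < c"
  shows "loc_asym_stable f e"
proof -
  define \<rho> where "\<rho> = m * r\<^sup>2"
  have V_nonneg: "0 \<le> V y" for y
    using V_lower[of y] \<open>0 < m\<close> by (smt (verit) zero_le_power2 mult_nonneg_nonneg)
  have sublevel_decr: "DV y (f y) \<le> - c * V y" if "V y < \<rho>" for y
  proof (rule decr)
    have "m * (dist y e)\<^sup>2 < m * r\<^sup>2"
      using V_lower[of y] that by (simp add: \<rho>_def)
    then show "dist y e < r"
      using \<open>0 < m\<close> \<open>0 < r\<close> by (simp add: power_less_imp_less_base)
  qed
  have decay: "dist (x t) e \<le> sqrt (M / m) * exp (- (c / 2) * t) * dist (x 0) e"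
    if sol: "is_solution f x" and x0: "dist (x 0) e < sqrt (\<rho> / M)" and "0 \<le> t" for x t
  proof (rule power2_le_imp_le)
    have "M * (dist (x 0) e)\<^sup>2 < M * (sqrt (\<rho> / M))\<^sup>2"
      using x0 \<open>0 < M\<close> by (simp add: power_strict_mono)
    then have "V (x 0) < \<rho>"
      using V_upper[of "x 0"] \<open>0 < M\<close> \<open>0 < m\<close> by (simp add: \<rho>_def)
    then have "exp (c * t) * V (x t) \<le> M * (dist (x 0) e)\<^sup>2"
      using Lyapunov_sublevel_exp_bound[OF sol V_deriv V_nonneg sublevel_decr] V_upper[of "x 0"]
        \<open>0 < c\<close> \<open>0 \<le> t\<close> by fastforce
    then have "exp (c * t) * (m * (dist (x t) e)\<^sup>2) \<le> M * (dist (x 0) e)\<^sup>2"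
      using V_lower[of "x t"] by (meson exp_ge_zero mult_left_mono order_trans)
    then have "m * (dist (x t) e)\<^sup>2 \<le> exp (- c * t) * (M * (dist (x 0) e)\<^sup>2)"
      by (simp add: exp_minus field_simps)
    moreover have "exp (- (c / 2) * t) ^ 2 = exp (- c * t)"
      by (simp add: power2_eq_square flip: exp_add)
    ultimately show "(dist (x t) e)\<^sup>2 \<le> (sqrt (M / m) * exp (- (c / 2) * t) * dist (x 0) e)\<^sup>2"
      using \<open>0 < m\<close> \<open>0 < M\<close> by (simp add: power_mult_distrib field_simps)
  qed (use \<open>0 < m\<close> \<open>0 < M\<close> in simp)
  show ?thesis
    by (rule exp_decay_imp_loc_asym_stable
          [where c = "c / 2" and d = "sqrt (\<rho> / M)" and K = "sqrt (M / m)"])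
      (use assms decay in \<open>auto simp: \<rho>_def\<close>)
qed

section \<open>Equilibria\<close>

lemma malaria_field_eq_0_iff:
  "malaria_field Lh Lv muh muv bh bv dl r1 (Sh, Ih, Rh, Sv, Iv) = 0 \<longleftrightarrow>
     Lh = bv * Iv * Sh + muh * Sh \<and> bv * Iv * Sh = (muh + dl + r1) * Ih \<and> r1 * Ih = muh * Rh \<and>
     Lv = bh * Sv * Ih + muv * Sv \<and> bh * Sv * Ih = muv * Iv"
  by (auto simp: malaria_field_def zero_prod_def algebra_simps)

lemma R0_gt_1_iff:
  assumes "0 < Lh" "0 < Lv" "0 < muh" "0 < muv" "0 < muh + dl + r1"
  shows "R0 Lh Lv muh muv bh bv dl r1 > 1 \<longleftrightarrow> (muh + dl + r1) * muh * muv\<^sup>2 < bh * bv * Lh * Lv"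
proof -
  have "(bh * (Lv / muv)) / (muh + dl + r1) * ((bv * (Lh / muh)) / muv)
          = (bh * bv * Lh * Lv) / ((muh + dl + r1) * muh * muv\<^sup>2)"
    by (simp add: field_simps power2_eq_square)
  then show ?thesis
    using assms by (simp add: R0_def pos_less_divide_eq)
qed

lemma nonneg_equilibrium_infected:
  assumes "0 < muh" "0 < muv"
    and "nonneg_state (Sh, Ih, Rh, Sv, Iv)"
    and eq: "malaria_field Lh Lv muh muv bh bv dl r1 (Sh, Ih, Rh, Sv, Iv) = 0"
    and "(Sh, Ih, Rh, Sv, Iv) \<noteq> disease_free_eq Lh Lv muh muv"
  shows "0 < Ih"
proof (rule ccontr)
  assume "\<not> 0 < Ih"
  then have "Ih = 0"
    using assms(3) by (simp add: nonneg_state_def)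
  then have "(Sh, Ih, Rh, Sv, Iv) = disease_free_eq Lh Lv muh muv"
    using eq \<open>0 < muh\<close> \<open>0 < muv\<close>
    by (simp add: malaria_field_eq_0_iff disease_free_eq_def field_simps)
  with assms(5) show False ..
qed

lemma infected_equilibrium_pos:
  assumes "0 < muh" "0 \<le> dl" "0 \<le> r1" "0 < muv" "0 < Ih"
    and "nonneg_state (Sh, Ih, Rh, Sv, Iv)"
    and "malaria_field Lh Lv muh muv bh bv dl r1 (Sh, Ih, Rh, Sv, Iv) = 0"
  shows "0 < Sh" "0 < Sv" "0 < Iv"
proof -
  have eqs: "bv * Iv * Sh = (muh + dl + r1) * Ih" "bh * Sv * Ih = muv * Iv"
    using assms(7) by (simp_all add: malaria_field_eq_0_iff)
  have "bv * Iv * Sh > 0"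
    unfolding eqs using assms by (simp add: add_pos_nonneg)
  then have "0 < Sh" "0 < Iv"
    using assms(6) by (auto simp: nonneg_state_def less_le)
  then have "bh * Sv * Ih > 0"
    unfolding eqs using \<open>0 < muv\<close> by simp
  then show "0 < Sh" "0 < Sv" "0 < Iv"
    using assms(6) \<open>0 < Sh\<close> \<open>0 < Iv\<close> by (auto simp: nonneg_state_def less_le)
qed

lemma infection_balance_iff:
  fixes a :: real
  assumes pos: "0 < a" "0 < muh" "0 < muv" "0 < bh" "0 < bv" "0 < Lh" "0 < Lv" "0 < Ih"
    and Sv: "Sv = Lv / (muv + bh * Ih)" and Iv: "Iv = bh * Sv * Ih / muv"
    and Sh: "Sh = Lh / (muh + bv * Iv)"
  shows "bv * Iv * Sh = a * Ih \<longleftrightarrow>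
           Ih * (a * bh * (muh * muv + bv * Lv)) = bh * bv * Lh * Lv - a * muh * muv\<^sup>2"
proof -
  have "0 < muv + bh * Ih"
    using pos by (simp add: add_pos_pos)
  have "Sv * (muv + bh * Ih) = Lv"
    using \<open>0 < muv + bh * Ih\<close> by (simp add: Sv)
  have "Iv * (muv * (muv + bh * Ih)) = bh * Ih * (Sv * (muv + bh * Ih))"
    using pos(3) unfolding Iv by (simp add: field_simps)
  then have Iv_eq: "Iv * (muv * (muv + bh * Ih)) = bh * Lv * Ih"
    using \<open>Sv * (muv + bh * Ih) = Lv\<close> by simp
  have "0 < Iv"
    using pos \<open>0 < muv + bh * Ih\<close> by (simp add: Iv Sv)
  then have "0 < muh + bv * Iv"
    using pos by (simp add: add_pos_pos)
  then have "bv * Iv * Sh = a * Ih \<longleftrightarrow> bv * Iv * (Lh - a * Ih) = a * Ih * muh"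
    unfolding Sh by (simp add: field_simps)
  also have "\<dots> \<longleftrightarrow> bv * Iv * (Lh - a * Ih) * (muv * (muv + bh * Ih))
                     = a * Ih * muh * (muv * (muv + bh * Ih))"
    using pos(3) \<open>0 < muv + bh * Ih\<close> by simp
  also have "\<dots> \<longleftrightarrow> bv * (Lh - a * Ih) * (Iv * (muv * (muv + bh * Ih)))
                     = a * Ih * muh * (muv * (muv + bh * Ih))"
    by (simp add: ac_simps)
  also have "\<dots> \<longleftrightarrow> Ih * (bv * (Lh - a * Ih) * bh * Lv) = Ih * (a * muh * muv * (muv + bh * Ih))"
    unfolding Iv_eq by (simp add: algebra_simps)
  also have "\<dots> \<longleftrightarrow> bv * (Lh - a * Ih) * bh * Lv = a * muh * muv * (muv + bh * Ih)"
    using pos by simp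
  also have "\<dots> \<longleftrightarrow> Ih * (a * bh * (muh * muv + bv * Lv)) = bh * bv * Lh * Lv - a * muh * muv\<^sup>2"
    by (simp add: algebra_simps power2_eq_square) (auto simp: algebra_simps)
  finally show ?thesis .
qed

lemma endemic_equilibrium_iff:
  assumes pos: "0 < Lh" "0 < Lv" "0 < muh" "0 < muv" "0 < bh" "0 < bv" "0 \<le> dl" "0 \<le> r1" "0 < Ih"
  shows "malaria_field Lh Lv muh muv bh bv dl r1 (Sh, Ih, Rh, Sv, Iv) = 0 \<longleftrightarrow>
           Sv = Lv / (muv + bh * Ih) \<and> Iv = bh * Sv * Ih / muv \<and> Sh = Lh / (muh + bv * Iv) \<and>
           Rh = r1 * Ih / muh \<and>
           Ih * ((muh + dl + r1) * bh * (muh * muv + bv * Lv))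
             = bh * bv * Lh * Lv - (muh + dl + r1) * muh * muv\<^sup>2"
proof -
  have "0 < muv + bh * Ih"
    using pos by (simp add: add_pos_pos)
  have Sv_iff: "Lv = bh * Sv * Ih + muv * Sv \<longleftrightarrow> Sv = Lv / (muv + bh * Ih)"
    using \<open>0 < muv + bh * Ih\<close> by (auto simp: field_simps)
  have Iv_iff: "bh * Sv * Ih = muv * Iv \<longleftrightarrow> Iv = bh * Sv * Ih / muv"
    using pos by (auto simp: field_simps)
  have Rh_iff: "r1 * Ih = muh * Rh \<longleftrightarrow> Rh = r1 * Ih / muh"
    using pos by (auto simp: field_simps)
  have Sh_iff: "Lh = bv * Iv * Sh + muh * Sh \<longleftrightarrow> Sh = Lh / (muh + bv * Iv)"
    if "Sv = Lv / (muv + bh * Ih)" "Iv = bh * Sv * Ih / muv"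
  proof -
    have "0 < muh + bv * Iv"
      using that pos \<open>0 < muv + bh * Ih\<close> by (simp add: add_pos_nonneg)
    then show ?thesis
      by (auto simp: field_simps)
  qed
  have "malaria_field Lh Lv muh muv bh bv dl r1 (Sh, Ih, Rh, Sv, Iv) = 0 \<longleftrightarrow>
          Sv = Lv / (muv + bh * Ih) \<and> Iv = bh * Sv * Ih / muv \<and> Sh = Lh / (muh + bv * Iv) \<and>
          Rh = r1 * Ih / muh \<and> bv * Iv * Sh = (muh + dl + r1) * Ih"
    unfolding malaria_field_eq_0_iff using Sv_iff Iv_iff Rh_iff Sh_iff by blast
  also have "\<dots> \<longleftrightarrow>
          Sv = Lv / (muv + bh * Ih) \<and> Iv = bh * Sv * Ih / muv \<and> Sh = Lh / (muh + bv * Iv) \<and>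
          Rh = r1 * Ih / muh \<and>
          Ih * ((muh + dl + r1) * bh * (muh * muv + bv * Lv))
            = bh * bv * Lh * Lv - (muh + dl + r1) * muh * muv\<^sup>2"
    using infection_balance_iff[of "muh + dl + r1" muh muv bh bv Lh Lv Ih Sv Iv Sh] pos
    by (auto simp: add_pos_nonneg)
  finally show ?thesis .
qed

lemma endemic_equilibrium_unique:
  assumes "0 < Lh" "0 < Lv" "0 < muh" "0 < muv" "0 < bh" "0 < bv" "0 \<le> dl" "0 \<le> r1"
    and E: "nonneg_state E" "malaria_field Lh Lv muh muv bh bv dl r1 E = 0"
      "E \<noteq> disease_free_eq Lh Lv muh muv"
    and E': "nonneg_state E'" "malaria_field Lh Lv muh muv bh bv dl r1 E' = 0"
      "E' \<noteq> disease_free_eq Lh Lv muh muv"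
  shows "E' = E"
proof -
  obtain Sh Ih Rh Sv Iv where E_def: "E = (Sh, Ih, Rh, Sv, Iv)"
    by (cases E) auto
  obtain Sh' Ih' Rh' Sv' Iv' where E'_def: "E' = (Sh', Ih', Rh', Sv', Iv')"
    by (cases E') auto
  define D where "D = (muh + dl + r1) * bh * (muh * muv + bv * Lv)"
  have "0 < D"
    using assms by (simp add: D_def add_pos_nonneg add_pos_pos)
  have "0 < Ih" "0 < Ih'"
    using nonneg_equilibrium_infected assms(3,4) E E' unfolding E_def E'_def by blast+
  note equilibrium_iff = endemic_equilibrium_iff[OF assms(1-8)]
  have "Ih' * D = Ih * D"
    using E(2) E'(2) \<open>0 < Ih\<close> \<open>0 < Ih'\<close>
    by (simp add: E_def E'_def equilibrium_iff flip: D_def)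
  then have "Ih' = Ih"
    using \<open>0 < D\<close> by simp
  with E(2) E'(2) \<open>0 < Ih\<close> show "E' = E"
    by (simp add: E_def E'_def equilibrium_iff)
qed

lemma endemic_equilibrium_ex1:
  assumes "0 < Lh" "0 < Lv" "0 < muh" "0 < muv" "0 \<le> bh" "0 \<le> bv" "0 \<le> dl" "0 \<le> r1"
    and "R0 Lh Lv muh muv bh bv dl r1 > 1"
  shows "\<exists>!E. nonneg_state E \<and> malaria_field Lh Lv muh muv bh bv dl r1 E = 0
               \<and> E \<noteq> disease_free_eq Lh Lv muh muv"
proof -
  define a where "a = muh + dl + r1"
  have "0 < a"
    using assms by (simp add: a_def add_pos_nonneg)
  then have R0: "a * muh * muv\<^sup>2 < bh * bv * Lh * Lv"
    using R0_gt_1_iff assms unfolding a_def by blast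
  moreover have "0 < a * muh * muv\<^sup>2"
    using \<open>0 < a\<close> assms by simp
  ultimately have "bh * bv * Lh * Lv \<noteq> 0"
    by linarith
  then have "0 < bh" "0 < bv"
    using assms by (auto simp: less_le)
  define D where "D = a * bh * (muh * muv + bv * Lv)"
  define Ih where "Ih = (bh * bv * Lh * Lv - a * muh * muv\<^sup>2) / D"
  define Sv where "Sv = Lv / (muv + bh * Ih)"
  define Iv where "Iv = bh * Sv * Ih / muv"
  define Sh where "Sh = Lh / (muh + bv * Iv)"
  define Rh where "Rh = r1 * Ih / muh"
  have "0 < D"
    using assms \<open>0 < a\<close> \<open>0 < bh\<close> \<open>0 < bv\<close> by (simp add: D_def add_pos_pos)
  then have "0 < Ih"
    using R0 by (simp add: Ih_def)
  have "Ih * (a * bh * (muh * muv + bv * Lv)) = bh * bv * Lh * Lv - a * muh * muv\<^sup>2"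
    using \<open>0 < D\<close> by (simp add: Ih_def flip: D_def)
  then have "nonneg_state (Sh, Ih, Rh, Sv, Iv)
               \<and> malaria_field Lh Lv muh muv bh bv dl r1 (Sh, Ih, Rh, Sv, Iv) = 0
               \<and> (Sh, Ih, Rh, Sv, Iv) \<noteq> disease_free_eq Lh Lv muh muv"
    using assms \<open>0 < Ih\<close> \<open>0 < bh\<close> \<open>0 < bv\<close>
    by (auto simp: endemic_equilibrium_iff[OF assms(1-4) \<open>0 < bh\<close> \<open>0 < bv\<close> assms(7,8), folded a_def]
        nonneg_state_def disease_free_eq_def Sh_def Sv_def Iv_def Rh_def add_pos_pos)
  then show ?thesis
    using endemic_equilibrium_unique[OF assms(1-4) \<open>0 < bh\<close> \<open>0 < bv\<close> assms(7,8)]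
    by (intro ex1I[of _ "(Sh, Ih, Rh, Sv, Iv)"]) blast+
qed

section \<open>Relative coordinates around an infected equilibrium\<close>

text \<open>The recovered class is measured absolutely: its equilibrium value \<open>r1 * Ih / muh\<close>
  vanishes when \<open>r1 = 0\<close>.\<close>

definition rel_scale :: "state \<Rightarrow> state \<Rightarrow> state" where
  "rel_scale = (\<lambda>(Sh, Ih, Rh, Sv, Iv) (h1, h2, h3, h4, h5).
     (h1 / Sh, h2 / Ih, h3, h4 / Sv, h5 / Iv))"

definition rel_coords :: "state \<Rightarrow> state \<Rightarrow> state" where
  "rel_coords E y = rel_scale E (y - E)"

lemma bounded_linear_rel_scale: "bounded_linear (rel_scale E)"
proof -
  obtain Sh Ih Rh Sv Iv where "E = (Sh, Ih, Rh, Sv, Iv)"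
    by (cases E) auto
  then have "rel_scale E = (\<lambda>h. (fst h / Sh, fst (snd h) / Ih, fst (snd (snd h)),
                                   fst (snd (snd (snd h))) / Sv, snd (snd (snd (snd h))) / Iv))"
    by (simp add: rel_scale_def fun_eq_iff split: prod.split)
  then show ?thesis
    by (auto intro!: bounded_linear_intros bounded_linear_compose[OF bounded_linear_divide])
qed

lemma rel_coords_has_derivative: "(rel_coords E has_derivative rel_scale E) (at y)"
  unfolding rel_coords_def
  by (rule bounded_linear.has_derivative[OF bounded_linear_rel_scale])
    (auto intro!: derivative_eq_intros)

lemma rel_coords_cases:
  assumes "0 < Sh" "0 < Ih" "0 < Sv" "0 < Iv"
  obtains x1 x2 z x3 x4
  where "y = (Sh * (1 + x1), Ih * (1 + x2), Rh + z, Sv * (1 + x3), Iv * (1 + x4))"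
    and "rel_coords (Sh, Ih, Rh, Sv, Iv) y = (x1, x2, z, x3, x4)"
proof -
  obtain y1 y2 y3 y4 y5 where y: "y = (y1, y2, y3, y4, y5)"
    by (cases y) auto
  show ?thesis
    by (rule that[of "y1 / Sh - 1" "y2 / Ih - 1" "y3 - Rh" "y4 / Sv - 1" "y5 / Iv - 1"])
      (use assms in \<open>simp_all add: y rel_coords_def rel_scale_def field_simps\<close>)
qed

lemma power2_norm_state:
  fixes x1 x2 z x3 x4 :: real
  shows "(norm (x1, x2, z, x3, x4))\<^sup>2 = x1\<^sup>2 + x2\<^sup>2 + z\<^sup>2 + x3\<^sup>2 + x4\<^sup>2"
  by (simp add: norm_Pair)

lemma rel_coords_dist_bounds:
  assumes "0 < Sh" "0 < Ih" "0 < Sv" "0 < Iv"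
  obtains kl kh where "0 < kl" "0 < kh"
    and "\<And>y. kl * (norm (rel_coords (Sh, Ih, Rh, Sv, Iv) y))\<^sup>2 \<le> (dist y (Sh, Ih, Rh, Sv, Iv))\<^sup>2"
    and "\<And>y. (dist y (Sh, Ih, Rh, Sv, Iv))\<^sup>2 \<le> kh * (norm (rel_coords (Sh, Ih, Rh, Sv, Iv) y))\<^sup>2"
proof
  define kl where "kl = min (min (Sh\<^sup>2) (Ih\<^sup>2)) (min 1 (min (Sv\<^sup>2) (Iv\<^sup>2)))"
  define kh where "kh = Sh\<^sup>2 + Ih\<^sup>2 + 1 + Sv\<^sup>2 + Iv\<^sup>2"
  show "0 < kl" "0 < kh"
    using assms by (simp_all add: kl_def kh_def add_pos_nonneg)
  fix y
  obtain x1 x2 z x3 x4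
    where y: "y = (Sh * (1 + x1), Ih * (1 + x2), Rh + z, Sv * (1 + x3), Iv * (1 + x4))"
      and w: "rel_coords (Sh, Ih, Rh, Sv, Iv) y = (x1, x2, z, x3, x4)"
    using rel_coords_cases[OF assms] by blast
  have dist_eq: "(dist y (Sh, Ih, Rh, Sv, Iv))\<^sup>2
                   = Sh\<^sup>2 * x1\<^sup>2 + Ih\<^sup>2 * x2\<^sup>2 + 1 * z\<^sup>2 + Sv\<^sup>2 * x3\<^sup>2 + Iv\<^sup>2 * x4\<^sup>2"
    by (simp add: dist_norm y power2_norm_state[of "Sh * x1"] algebra_simps power_mult_distrib)
  have "kl * x1\<^sup>2 \<le> Sh\<^sup>2 * x1\<^sup>2" "kl * x2\<^sup>2 \<le> Ih\<^sup>2 * x2\<^sup>2" "kl * z\<^sup>2 \<le> 1 * z\<^sup>2"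
    "kl * x3\<^sup>2 \<le> Sv\<^sup>2 * x3\<^sup>2" "kl * x4\<^sup>2 \<le> Iv\<^sup>2 * x4\<^sup>2"
    by (intro mult_right_mono; simp add: kl_def)+
  then show "kl * (norm (rel_coords (Sh, Ih, Rh, Sv, Iv) y))\<^sup>2 \<le> (dist y (Sh, Ih, Rh, Sv, Iv))\<^sup>2"
    unfolding w dist_eq power2_norm_state by (simp add: algebra_simps)
  have "Sh\<^sup>2 * x1\<^sup>2 \<le> kh * x1\<^sup>2" "Ih\<^sup>2 * x2\<^sup>2 \<le> kh * x2\<^sup>2" "1 * z\<^sup>2 \<le> kh * z\<^sup>2"
    "Sv\<^sup>2 * x3\<^sup>2 \<le> kh * x3\<^sup>2" "Iv\<^sup>2 * x4\<^sup>2 \<le> kh * x4\<^sup>2"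
    by (intro mult_right_mono; simp add: kh_def)+
  then show "(dist y (Sh, Ih, Rh, Sv, Iv))\<^sup>2 \<le> kh * (norm (rel_coords (Sh, Ih, Rh, Sv, Iv) y))\<^sup>2"
    unfolding w dist_eq power2_norm_state by (simp add: algebra_simps)
qed

definition rel_field :: "real \<Rightarrow> real \<Rightarrow> real \<Rightarrow> real \<Rightarrow> real \<Rightarrow> real \<Rightarrow> state \<Rightarrow> state" where
  "rel_field p q a mh mv g = (\<lambda>(x1, x2, z, x3, x4).
     (- (p + mh) * x1 - p * x4 - p * x1 * x4,
      a * (x1 + x4 - x2 + x1 * x4),
      g * x2 - mh * z,
      - (q + mv) * x3 - q * x2 - q * x2 * x3,
      mv * (x2 + x3 - x4 + x2 * x3)))"

lemma rel_scale_malaria_field: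
  assumes pos: "0 < Sh" "0 < Ih" "0 < Sv" "0 < Iv"
    and "malaria_field Lh Lv muh muv bh bv dl r1 (Sh, Ih, Rh, Sv, Iv) = 0"
  shows "rel_scale (Sh, Ih, Rh, Sv, Iv) (malaria_field Lh Lv muh muv bh bv dl r1 y)
           = rel_field (bv * Iv) (bh * Ih) (muh + dl + r1) muh muv (r1 * Ih)
               (rel_coords (Sh, Ih, Rh, Sv, Iv) y)"
proof -
  have e: "Lh = bv * Iv * Sh + muh * Sh" "bv * Iv * Sh = (muh + dl + r1) * Ih" "r1 * Ih = muh * Rh"
    "Lv = bh * Sv * Ih + muv * Sv" "bh * Sv * Ih = muv * Iv"
    using assms(5) by (simp_all add: malaria_field_eq_0_iff)
  obtain x1 x2 z x3 x4
    where y: "y = (Sh * (1 + x1), Ih * (1 + x2), Rh + z, Sv * (1 + x3), Iv * (1 + x4))"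
      and "rel_coords (Sh, Ih, Rh, Sv, Iv) y = (x1, x2, z, x3, x4)"
    using rel_coords_cases[OF pos] by blast
  moreover have "(Lh - bv * (Iv * (1 + x4)) * (Sh * (1 + x1)) - muh * (Sh * (1 + x1))) / Sh
                   = - (bv * Iv + muh) * x1 - bv * Iv * x4 - bv * Iv * x1 * x4"
    using pos unfolding e(1) by (simp add: field_simps)
  moreover have "(bv * (Iv * (1 + x4)) * (Sh * (1 + x1)) - (muh + dl + r1) * (Ih * (1 + x2))) / Ih
                   = (muh + dl + r1) * (x1 + x4 - x2 + x1 * x4)"
  proof -
    have "bv * (Iv * (1 + x4)) * (Sh * (1 + x1)) = (muh + dl + r1) * Ih * ((1 + x4) * (1 + x1))"
      using e(2) by (simp add: ac_simps)
    then show ?thesis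
      using pos by (simp add: field_simps)
  qed
  moreover have "(Lv - bh * (Sv * (1 + x3)) * (Ih * (1 + x2)) - muv * (Sv * (1 + x3))) / Sv
                   = - (bh * Ih + muv) * x3 - bh * Ih * x2 - bh * Ih * x2 * x3"
    using pos unfolding e(4) by (simp add: field_simps)
  moreover have "(bh * (Sv * (1 + x3)) * (Ih * (1 + x2)) - muv * (Iv * (1 + x4))) / Iv
                   = muv * (x2 + x3 - x4 + x2 * x3)"
  proof -
    have "bh * (Sv * (1 + x3)) * (Ih * (1 + x2)) = muv * Iv * ((1 + x3) * (1 + x2))"
      using e(5) by (simp add: ac_simps)
    then show ?thesis
      using pos by (simp add: field_simps)
  qed
  ultimately show ?thesis
    using e(3) by (simp add: y malaria_field_def rel_scale_def rel_field_def algebra_simps)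
qed

section \<open>A strict Lyapunov function\<close>

definition lyap_form :: "real \<Rightarrow> real \<Rightarrow> real \<Rightarrow> real \<Rightarrow> real \<Rightarrow> real \<Rightarrow> state \<Rightarrow> real" where
  "lyap_form p a q mv \<epsilon> \<beta> = (\<lambda>(x1, x2, z, x3, x4).
     x1\<^sup>2 / p + x2\<^sup>2 / a + x3\<^sup>2 / q + x4\<^sup>2 / mv + \<epsilon> * x1 * x4 + \<beta> * z\<^sup>2)"

definition lyap_form_deriv :: "real \<Rightarrow> real \<Rightarrow> real \<Rightarrow> real \<Rightarrow> real \<Rightarrow> real \<Rightarrow> state \<Rightarrow> state \<Rightarrow> real" where
  "lyap_form_deriv p a q mv \<epsilon> \<beta> = (\<lambda>(x1, x2, z, x3, x4) (h1, h2, hz, h3, h4).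
     2 * x1 * h1 / p + 2 * x2 * h2 / a + 2 * x3 * h3 / q + 2 * x4 * h4 / mv
     + \<epsilon> * (h1 * x4 + x1 * h4) + 2 * \<beta> * z * hz)"

lemma lyap_form_has_derivative:
  "(lyap_form p a q mv \<epsilon> \<beta> has_derivative lyap_form_deriv p a q mv \<epsilon> \<beta> w) (at w)"
proof -
  have "lyap_form p a q mv \<epsilon> \<beta> = (\<lambda>w. inverse p * (fst w)\<^sup>2 + inverse a * (fst (snd w))\<^sup>2
          + inverse q * (fst (snd (snd (snd w))))\<^sup>2 + inverse mv * (snd (snd (snd (snd w))))\<^sup>2
          + \<epsilon> * fst w * snd (snd (snd (snd w))) + \<beta> * (fst (snd (snd w)))\<^sup>2)"
    by (simp add: lyap_form_def fun_eq_iff divide_inverse split: prod.split)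
  then show ?thesis
    by (cases w)
      (auto intro!: derivative_eq_intros simp: lyap_form_deriv_def divide_inverse algebra_simps)
qed

lemma mult_le_half_sum_squares:
  fixes a b c r :: real
  assumes "\<bar>a\<bar> \<le> r"
  shows "b * c * a \<le> r * (b\<^sup>2 + c\<^sup>2) / 2"
proof -
  have "b * c * a \<le> \<bar>b * c\<bar> * \<bar>a\<bar>"
    using abs_ge_self[of "b * c * a"] by (simp add: abs_mult)
  also have "\<dots> \<le> (b\<^sup>2 + c\<^sup>2) / 2 * r"
    using assms sum_squares_bound[of b c] sum_squares_bound[of b "-c"]
    by (intro mult_mono) (auto simp: abs_if)
  finally show ?thesis
    by (simp add: ac_simps)
qed

lemma abs_cross_term_le:
  fixes \<epsilon> p mv x1 x4 :: real
  assumes "0 \<le> \<epsilon>" "\<epsilon> \<le> 1 / p" "\<epsilon> \<le> 1 / mv"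
  shows "\<bar>\<epsilon> * x1 * x4\<bar> \<le> x1\<^sup>2 / p / 2 + x4\<^sup>2 / mv / 2"
proof -
  have "x1 * x4 * \<epsilon> \<le> \<epsilon> * (x1\<^sup>2 + x4\<^sup>2) / 2" "x1 * x4 * (- \<epsilon>) \<le> \<epsilon> * (x1\<^sup>2 + x4\<^sup>2) / 2"
    using mult_le_half_sum_squares[of \<epsilon> \<epsilon> x1 x4] mult_le_half_sum_squares[of "- \<epsilon>" \<epsilon> x1 x4]
      \<open>0 \<le> \<epsilon>\<close>
    by simp_all
  moreover have "\<epsilon> * x1\<^sup>2 \<le> x1\<^sup>2 / p" "\<epsilon> * x4\<^sup>2 \<le> x4\<^sup>2 / mv"
    using assms mult_right_mono[of \<epsilon> "1 / p" "x1\<^sup>2"] mult_right_mono[of \<epsilon> "1 / mv" "x4\<^sup>2"]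
    by simp_all
  ultimately show ?thesis
    by (simp add: algebra_simps abs_le_iff)
qed

lemma lyap_form_bounds:
  assumes "0 < p" "0 < a" "0 < q" "0 < mv" "0 < \<beta>" "0 \<le> \<epsilon>" "\<epsilon> \<le> 1 / p" "\<epsilon> \<le> 1 / mv"
  obtains m M where "0 < m" "0 < M"
    and "\<And>w. m * (norm w)\<^sup>2 \<le> lyap_form p a q mv \<epsilon> \<beta> w"
    and "\<And>w. lyap_form p a q mv \<epsilon> \<beta> w \<le> M * (norm w)\<^sup>2"
proof
  define m where "m = min (min (1 / (2 * p)) (1 / a)) (min \<beta> (min (1 / q) (1 / (2 * mv))))"
  define M where "M = 3 / (2 * p) + 1 / a + \<beta> + 1 / q + 3 / (2 * mv)"
  have pos: "0 < 1 / (2 * p)" "0 < 3 / (2 * p)" "0 < 1 / a" "0 < 1 / q"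
    "0 < 1 / (2 * mv)" "0 < 3 / (2 * mv)"
    using assms by simp_all
  show "0 < m"
    using assms by (simp add: m_def)
  show "0 < M"
    unfolding M_def using pos \<open>0 < \<beta>\<close> by linarith
  fix w :: state
  obtain x1 x2 z x3 x4 where w: "w = (x1, x2, z, x3, x4)"
    by (cases w) auto
  have V: "lyap_form p a q mv \<epsilon> \<beta> w
            = x1\<^sup>2 / p + x2\<^sup>2 / a + x3\<^sup>2 / q + x4\<^sup>2 / mv + \<epsilon> * x1 * x4 + \<beta> * z\<^sup>2"
    by (simp add: w lyap_form_def)
  have cross: "\<epsilon> * x1 * x4 \<le> x1\<^sup>2 / p / 2 + x4\<^sup>2 / mv / 2"
    "- (x1\<^sup>2 / p / 2 + x4\<^sup>2 / mv / 2) \<le> \<epsilon> * x1 * x4"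
    using abs_cross_term_le[OF assms(6-8), of x1 x4] by (simp_all add: abs_le_iff)
  have "m * x1\<^sup>2 \<le> (1 / (2 * p)) * x1\<^sup>2" "m * x2\<^sup>2 \<le> (1 / a) * x2\<^sup>2" "m * z\<^sup>2 \<le> \<beta> * z\<^sup>2"
    "m * x3\<^sup>2 \<le> (1 / q) * x3\<^sup>2" "m * x4\<^sup>2 \<le> (1 / (2 * mv)) * x4\<^sup>2"
    by (intro mult_right_mono; simp add: m_def)+
  moreover have "m * (norm w)\<^sup>2 = m * x1\<^sup>2 + m * x2\<^sup>2 + m * z\<^sup>2 + m * x3\<^sup>2 + m * x4\<^sup>2"
    by (simp add: w power2_norm_state algebra_simps)
  ultimately show "m * (norm w)\<^sup>2 \<le> lyap_form p a q mv \<epsilon> \<beta> w"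
    unfolding V using cross by simp
  have "3 / (2 * p) \<le> M" "1 / a \<le> M" "\<beta> \<le> M" "1 / q \<le> M" "3 / (2 * mv) \<le> M"
    unfolding M_def using pos \<open>0 < \<beta>\<close> by linarith+
  then have "(3 / (2 * p)) * x1\<^sup>2 \<le> M * x1\<^sup>2" "(1 / a) * x2\<^sup>2 \<le> M * x2\<^sup>2" "\<beta> * z\<^sup>2 \<le> M * z\<^sup>2"
    "(1 / q) * x3\<^sup>2 \<le> M * x3\<^sup>2" "(3 / (2 * mv)) * x4\<^sup>2 \<le> M * x4\<^sup>2"
    by (intro mult_right_mono; simp)+
  moreover have "M * (norm w)\<^sup>2 = M * x1\<^sup>2 + M * x2\<^sup>2 + M * z\<^sup>2 + M * x3\<^sup>2 + M * x4\<^sup>2"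
    by (simp add: w power2_norm_state algebra_simps)
  ultimately show "lyap_form p a q mv \<epsilon> \<beta> w \<le> M * (norm w)\<^sup>2"
    unfolding V using cross by simp
qed

lemma lyap_form_deriv_cross_term_le:
  fixes p mh mv x1 x2 x3 x4 :: real
  assumes "0 < p" "0 < mv"
  shows "- p * x4\<^sup>2 - (p + mh) * x1 * x4 + mv * x1 * (x2 + x3 - x4)
           \<le> - (p / 2) * x4\<^sup>2 + ((p + mh)\<^sup>2 / (2 * p) + 2 * mv) * x1\<^sup>2
              + (mv / 2) * ((x1 + x4 - x2)\<^sup>2 + x3\<^sup>2)"
proof -
  define w where "w = x1 + x4 - x2"
  have "(p / 2) * x4\<^sup>2 + ((p + mh)\<^sup>2 / (2 * p)) * x1\<^sup>2 + (p + mh) * x1 * x4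
          = (p * x4 + (p + mh) * x1)\<^sup>2 / (2 * p)"
    using \<open>0 < p\<close> by (simp add: field_simps power2_eq_square)
  moreover have "0 \<le> (p * x4 + (p + mh) * x1)\<^sup>2 / (2 * p)"
    using \<open>0 < p\<close> by simp
  moreover have "mv * x1 * (x2 + x3 - x4) \<le> 2 * mv * x1\<^sup>2 + (mv / 2) * (w\<^sup>2 + x3\<^sup>2)"
    using mult_le_half_sum_squares[of "-mv" mv x1 w] mult_le_half_sum_squares[of mv mv x1 x3]
      \<open>0 < mv\<close>
    by (simp add: w_def algebra_simps power2_eq_square)
  ultimately show ?thesis
    unfolding w_def[symmetric] by (simp add: algebra_simps)
qed

lemma lyap_form_deriv_quadratic_part_le:
  fixes p q mh mv \<epsilon> x1 x2 x3 x4 :: real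
  assumes "0 < p" "0 < q" "0 < mh" "0 < mv" "0 < \<epsilon>" "\<epsilon> * p \<le> 1"
    and small: "4 * ((p + mh)\<^sup>2 / (2 * p) + 2 * mv) * \<epsilon> \<le> 1"
  shows "- 2 * (mh / p) * x1\<^sup>2 - 2 * (mv / q) * x3\<^sup>2 - x1\<^sup>2 - x3\<^sup>2
           - (x1 + x4 - x2)\<^sup>2 - (x3 + x2 - x4)\<^sup>2
           + \<epsilon> * (- p * x4\<^sup>2 - (p + mh) * x1 * x4 + mv * x1 * (x2 + x3 - x4))
         \<le> - (\<epsilon> * p / 16) * (x1\<^sup>2 + x2\<^sup>2 + x3\<^sup>2 + x4\<^sup>2)"
proof -
  define w where "w = x1 + x4 - x2"
  define K where "K = (p + mh)\<^sup>2 / (2 * p) + 2 * mv"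
  define s where "s = (x3 + x2 - x4)\<^sup>2"
  define L where "L = - p * x4\<^sup>2 - (p + mh) * x1 * x4 + mv * x1 * (x2 + x3 - x4)"
  have "L \<le> - (p / 2) * x4\<^sup>2 + K * x1\<^sup>2 + (mv / 2) * (w\<^sup>2 + x3\<^sup>2)"
    unfolding L_def K_def w_def by (rule lyap_form_deriv_cross_term_le[OF \<open>0 < p\<close> \<open>0 < mv\<close>])
  then have "\<epsilon> * L \<le> \<epsilon> * (- (p / 2) * x4\<^sup>2 + K * x1\<^sup>2 + (mv / 2) * (w\<^sup>2 + x3\<^sup>2))"
    using \<open>0 < \<epsilon>\<close> by (simp add: mult_left_mono)
  then have L_bound: "\<epsilon> * L \<le> - (1 / 2) * (\<epsilon> * p * x4\<^sup>2) + \<epsilon> * K * x1\<^sup>2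
                               + (1 / 2) * (\<epsilon> * mv * w\<^sup>2) + (1 / 2) * (\<epsilon> * mv * x3\<^sup>2)"
    by (simp add: algebra_simps)
  have "\<epsilon> * K \<le> 1 / 4"
    using small by (simp add: K_def algebra_simps)
  moreover have "\<epsilon> * (2 * mv) \<le> \<epsilon> * K"
    using \<open>0 < p\<close> \<open>0 < \<epsilon>\<close> by (intro mult_left_mono) (simp_all add: K_def)
  ultimately have "\<epsilon> * K * x1\<^sup>2 \<le> (1 / 4) * x1\<^sup>2" "\<epsilon> * mv * w\<^sup>2 \<le> (1 / 2) * w\<^sup>2"
    "\<epsilon> * mv * x3\<^sup>2 \<le> (1 / 2) * x3\<^sup>2"
    by (intro mult_right_mono; simp)+
  moreover have "x2\<^sup>2 \<le> 3 * (x1\<^sup>2 + x4\<^sup>2 + w\<^sup>2)"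
    using sum_squares_bound[of x1 x4] sum_squares_bound[of x1 "-w"] sum_squares_bound[of x4 "-w"]
    by (simp add: w_def power2_eq_square algebra_simps)
  then have "\<epsilon> * p * x2\<^sup>2 \<le> \<epsilon> * p * (3 * (x1\<^sup>2 + x4\<^sup>2 + w\<^sup>2))"
    using \<open>0 < p\<close> \<open>0 < \<epsilon>\<close> by (intro mult_left_mono) simp_all
  then have "\<epsilon> * p * x2\<^sup>2 \<le> 3 * (\<epsilon> * p * x1\<^sup>2) + 3 * (\<epsilon> * p * x4\<^sup>2) + 3 * (\<epsilon> * p * w\<^sup>2)"
    by (simp add: algebra_simps)
  moreover have "\<epsilon> * p * x1\<^sup>2 \<le> x1\<^sup>2" "\<epsilon> * p * x3\<^sup>2 \<le> x3\<^sup>2" "\<epsilon> * p * w\<^sup>2 \<le> w\<^sup>2"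
    "0 \<le> \<epsilon> * p * x4\<^sup>2"
    using \<open>\<epsilon> * p \<le> 1\<close> \<open>0 < p\<close> \<open>0 < \<epsilon>\<close> by (simp_all add: mult_left_le_one_le)
  moreover have "0 \<le> mh / p * x1\<^sup>2" "0 \<le> mv / q * x3\<^sup>2" "0 \<le> s"
    "0 \<le> x1\<^sup>2" "0 \<le> x3\<^sup>2" "0 \<le> w\<^sup>2"
    using assms by (simp_all add: s_def)
  moreover have lhs_eq: "- 2 * (mh / p) * x1\<^sup>2 - 2 * (mv / q) * x3\<^sup>2 - x1\<^sup>2 - x3\<^sup>2
                   - (x1 + x4 - x2)\<^sup>2 - (x3 + x2 - x4)\<^sup>2
                   + \<epsilon> * (- p * x4\<^sup>2 - (p + mh) * x1 * x4 + mv * x1 * (x2 + x3 - x4))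
                 = - 2 * (mh / p * x1\<^sup>2) - 2 * (mv / q * x3\<^sup>2) - x1\<^sup>2 - x3\<^sup>2 - w\<^sup>2 - s
                   + \<epsilon> * L"
    by (simp add: w_def s_def L_def)
  moreover have rhs_eq: "- (\<epsilon> * p / 16) * (x1\<^sup>2 + x2\<^sup>2 + x3\<^sup>2 + x4\<^sup>2)
                   = - (1 / 16) * (\<epsilon> * p * x1\<^sup>2) - (1 / 16) * (\<epsilon> * p * x2\<^sup>2)
                     - (1 / 16) * (\<epsilon> * p * x3\<^sup>2) - (1 / 16) * (\<epsilon> * p * x4\<^sup>2)"
    by (simp add: algebra_simps)
  ultimately show ?thesis
    using L_bound unfolding lhs_eq rhs_eq by linarith
qed

lemma lyap_form_deriv_cubic_part_le:
  fixes u v r x1 x2 x3 x4 :: real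
  assumes "\<bar>u\<bar> \<le> 1" "\<bar>v\<bar> \<le> 1"
    and x: "\<bar>x1\<bar> \<le> r" "\<bar>x2\<bar> \<le> r" "\<bar>x3\<bar> \<le> r" "\<bar>x4\<bar> \<le> r"
  shows "- 2 * x1\<^sup>2 * x4 + 2 * x1 * x2 * x4 - 2 * x2 * x3\<^sup>2 + 2 * x2 * x3 * x4
           + u * x1 * x2 * x3 - v * x1 * x4\<^sup>2
         \<le> 4 * r * (x1\<^sup>2 + x2\<^sup>2 + x3\<^sup>2 + x4\<^sup>2)"
proof -
  have "\<bar>u * x3\<bar> \<le> r" "\<bar>v * x1\<bar> \<le> r"
    using assms mult_mono[of "\<bar>u\<bar>" 1 "\<bar>x3\<bar>" r] mult_mono[of "\<bar>v\<bar>" 1 "\<bar>x1\<bar>" r]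
    by (simp_all add: abs_mult)
  then have "- (x1\<^sup>2 * x4) \<le> r * x1\<^sup>2" "x1 * x2 * x4 \<le> r * x1\<^sup>2 / 2 + r * x2\<^sup>2 / 2"
    "- (x2 * x3\<^sup>2) \<le> r * x3\<^sup>2" "x2 * x3 * x4 \<le> r * x3\<^sup>2 / 2 + r * x4\<^sup>2 / 2"
    "u * x1 * x2 * x3 \<le> r * x1\<^sup>2 / 2 + r * x2\<^sup>2 / 2" "- (v * x1 * x4\<^sup>2) \<le> r * x4\<^sup>2"
    using mult_le_half_sum_squares[of "-x4" r x1 x1] mult_le_half_sum_squares[of x4 r x1 x2]
      mult_le_half_sum_squares[of "-x2" r x3 x3] mult_le_half_sum_squares[of x2 r x3 x4]
      mult_le_half_sum_squares[of "u * x3" r x1 x2]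
      mult_le_half_sum_squares[of "- (v * x1)" r x4 x4] x
    by (simp_all add: power2_eq_square algebra_simps)
  moreover have "0 \<le> r * x1\<^sup>2" "0 \<le> r * x2\<^sup>2" "0 \<le> r * x3\<^sup>2" "0 \<le> r * x4\<^sup>2"
    using x by (simp_all add: order_trans[OF abs_ge_zero])
  moreover have "4 * r * (x1\<^sup>2 + x2\<^sup>2 + x3\<^sup>2 + x4\<^sup>2)
                   = 4 * (r * x1\<^sup>2) + 4 * (r * x2\<^sup>2) + 4 * (r * x3\<^sup>2) + 4 * (r * x4\<^sup>2)"
    by (simp add: algebra_simps)
  ultimately show ?thesis
    by linarith
qed

lemma lyap_form_deriv_recovered_part_le:
  fixes \<beta> \<eta> g mh x2 z :: real
  assumes "0 < mh" "0 \<le> \<beta>" "16 * \<beta> * g\<^sup>2 \<le> \<eta> * mh"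
  shows "2 * \<beta> * z * (g * x2 - mh * z) \<le> - \<beta> * mh * z\<^sup>2 + (\<eta> / 16) * x2\<^sup>2"
proof -
  have "2 * mh * (g * x2 * z) \<le> mh\<^sup>2 * z\<^sup>2 + g\<^sup>2 * x2\<^sup>2"
    using zero_le_power2[of "mh * z - g * x2"] by (simp add: power2_eq_square algebra_simps)
  then have "2 * (g * x2 * z) \<le> mh * z\<^sup>2 + (g\<^sup>2 / mh) * x2\<^sup>2"
    using \<open>0 < mh\<close> by (simp add: field_simps power2_eq_square)
  then have "\<beta> * (2 * (g * x2 * z)) \<le> \<beta> * (mh * z\<^sup>2) + (\<beta> * (g\<^sup>2 / mh)) * x2\<^sup>2"
    using \<open>0 \<le> \<beta>\<close> by (metis distrib_left mult.assoc mult_left_mono)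
  moreover have "\<beta> * (g\<^sup>2 / mh) \<le> \<eta> / 16"
    using assms by (simp add: field_simps)
  then have "(\<beta> * (g\<^sup>2 / mh)) * x2\<^sup>2 \<le> (\<eta> / 16) * x2\<^sup>2"
    by (rule mult_right_mono) simp
  moreover have "2 * \<beta> * z * (g * x2 - mh * z) = \<beta> * (2 * (g * x2 * z)) - 2 * (\<beta> * (mh * z\<^sup>2))"
    by (simp add: algebra_simps power2_eq_square)
  ultimately show ?thesis
    by linarith
qed

lemma lyap_form_deriv_rel_field_eq:
  assumes "0 < p" "0 < q" "0 < a" "0 < mv"
  shows "lyap_form_deriv p a q mv \<epsilon> \<beta> (x1, x2, z, x3, x4)
           (rel_field p q a mh mv g (x1, x2, z, x3, x4))
      = (- 2 * (mh / p) * x1\<^sup>2 - 2 * (mv / q) * x3\<^sup>2 - x1\<^sup>2 - x3\<^sup>2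
           - (x1 + x4 - x2)\<^sup>2 - (x3 + x2 - x4)\<^sup>2
           + \<epsilon> * (- p * x4\<^sup>2 - (p + mh) * x1 * x4 + mv * x1 * (x2 + x3 - x4)))
        + (- 2 * x1\<^sup>2 * x4 + 2 * x1 * x2 * x4 - 2 * x2 * x3\<^sup>2 + 2 * x2 * x3 * x4
           + (\<epsilon> * mv) * x1 * x2 * x3 - (\<epsilon> * p) * x1 * x4\<^sup>2)
        + 2 * \<beta> * z * (g * x2 - mh * z)"
  using assms by (simp add: lyap_form_deriv_def rel_field_def field_simps power2_eq_square)

lemma lyap_form_deriv_rel_field_le:
  fixes p q a mh mv g \<epsilon> \<beta> r x1 x2 z x3 x4 :: real
  assumes "0 < p" "0 < q" "0 < a" "0 < mh" "0 < mv" "0 < \<epsilon>" "0 \<le> \<beta>"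
    and "\<epsilon> * p \<le> 1" "\<epsilon> * mv \<le> 1" "4 * ((p + mh)\<^sup>2 / (2 * p) + 2 * mv) * \<epsilon> \<le> 1"
    and "16 * \<beta> * g\<^sup>2 \<le> \<epsilon> * p / 2 * mh" "r \<le> \<epsilon> * p / 256"
    and x_small: "\<bar>x1\<bar> \<le> r" "\<bar>x2\<bar> \<le> r" "\<bar>x3\<bar> \<le> r" "\<bar>x4\<bar> \<le> r"
  shows "lyap_form_deriv p a q mv \<epsilon> \<beta> (x1, x2, z, x3, x4)
           (rel_field p q a mh mv g (x1, x2, z, x3, x4))
           \<le> - (\<epsilon> * p / 64) * (x1\<^sup>2 + x2\<^sup>2 + x3\<^sup>2 + x4\<^sup>2) - \<beta> * mh * z\<^sup>2"
proof -
  define S where "S = x1\<^sup>2 + x2\<^sup>2 + x3\<^sup>2 + x4\<^sup>2"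
  have "\<bar>\<epsilon> * mv\<bar> \<le> 1" "\<bar>\<epsilon> * p\<bar> \<le> 1"
    using assms by simp_all
  have "lyap_form_deriv p a q mv \<epsilon> \<beta> (x1, x2, z, x3, x4)
          (rel_field p q a mh mv g (x1, x2, z, x3, x4))
          \<le> - (\<epsilon> * p / 16) * S + 4 * r * S + (- \<beta> * mh * z\<^sup>2 + (\<epsilon> * p / 2 / 16) * x2\<^sup>2)"
    unfolding lyap_form_deriv_rel_field_eq[OF assms(1,2,3,5)] S_def
    using lyap_form_deriv_quadratic_part_le[OF assms(1,2,4,5,6,8,10)]
      lyap_form_deriv_cubic_part_le[OF \<open>\<bar>\<epsilon> * mv\<bar> \<le> 1\<close> \<open>\<bar>\<epsilon> * p\<bar> \<le> 1\<close> x_small]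
      lyap_form_deriv_recovered_part_le[OF \<open>0 < mh\<close> \<open>0 \<le> \<beta>\<close> assms(11)]
    by (intro add_mono) simp_all
  also have "\<dots> \<le> - (\<epsilon> * p / 64) * S - \<beta> * mh * z\<^sup>2"
  proof -
    have "4 * r * S \<le> 4 * (\<epsilon> * p / 256) * S" "(\<epsilon> * p / 32) * x2\<^sup>2 \<le> (\<epsilon> * p / 32) * S"
      using assms by (intro mult_right_mono mult_left_mono; simp add: S_def)+
    then show ?thesis
      by (simp add: algebra_simps)
  qed
  finally show ?thesis
    unfolding S_def .
qed

lemma lyap_form_decreases_near_0:
  fixes p q a mh mv g :: real
  assumes "0 < p" "0 < q" "0 < a" "0 < mh" "0 < mv"
  obtains \<epsilon> \<beta> r c where "0 < \<epsilon>" "\<epsilon> \<le> 1 / p" "\<epsilon> \<le> 1 / mv" "0 < \<beta>" "0 < r" "0 < c"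
    and "\<And>w. norm w < r \<Longrightarrow>
           lyap_form_deriv p a q mv \<epsilon> \<beta> w (rel_field p q a mh mv g w) \<le> - c * (norm w)\<^sup>2"
proof -
  define K where "K = (p + mh)\<^sup>2 / (2 * p) + 2 * mv"
  define \<epsilon> where "\<epsilon> = 1 / (4 * K + p)"
  define \<beta> where "\<beta> = \<epsilon> * p * mh / (32 * (g\<^sup>2 + 1))"
  define r where "r = \<epsilon> * p / 256"
  define c where "c = min (\<epsilon> * p / 64) (\<beta> * mh)"
  have "2 * mv \<le> K"
    using \<open>0 < p\<close> by (simp add: K_def)
  then have "0 < 4 * K + p" "0 < \<epsilon>"
    using assms by (simp_all add: \<epsilon>_def)
  then have \<epsilon>_small: "\<epsilon> * p \<le> 1" "4 * K * \<epsilon> \<le> 1" "\<epsilon> * (8 * mv) \<le> 1"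
    using \<open>2 * mv \<le> K\<close> assms by (simp_all add: \<epsilon>_def field_simps)
  have "0 < g\<^sup>2 + 1"
    by (simp add: add_nonneg_pos)
  then have "0 < \<beta>"
    unfolding \<beta>_def using assms \<open>0 < \<epsilon>\<close> by (intro divide_pos_pos mult_pos_pos) auto
  have "16 * \<beta> * g\<^sup>2 = (\<epsilon> * p / 2 * mh) * (g\<^sup>2 / (g\<^sup>2 + 1))"
    using \<open>0 < g\<^sup>2 + 1\<close> by (simp add: \<beta>_def field_simps)
  also have "\<dots> \<le> \<epsilon> * p / 2 * mh"
    using assms \<open>0 < \<epsilon>\<close> \<open>0 < g\<^sup>2 + 1\<close> by (intro mult_left_le) simp_all
  finally have \<beta>_small: "16 * \<beta> * g\<^sup>2 \<le> \<epsilon> * p / 2 * mh" .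
  show thesis
  proof (rule that[of \<epsilon> \<beta> r c])
    show "0 < \<epsilon>" "0 < \<beta>" "0 < r" "0 < c"
      using assms \<open>0 < \<epsilon>\<close> \<open>0 < \<beta>\<close> by (simp_all add: r_def c_def)
    show "\<epsilon> \<le> 1 / p" "\<epsilon> \<le> 1 / mv"
      using \<epsilon>_small assms by (simp_all add: field_simps)
  next
    fix w :: state assume "norm w < r"
    obtain x1 x2 z x3 x4 where w: "w = (x1, x2, z, x3, x4)"
      by (cases w) auto
    have "x1\<^sup>2 \<le> (norm w)\<^sup>2" "x2\<^sup>2 \<le> (norm w)\<^sup>2" "x3\<^sup>2 \<le> (norm w)\<^sup>2" "x4\<^sup>2 \<le> (norm w)\<^sup>2"
      unfolding w power2_norm_state by simp_all
    then have "\<bar>x1\<bar> \<le> norm w" "\<bar>x2\<bar> \<le> norm w" "\<bar>x3\<bar> \<le> norm w" "\<bar>x4\<bar> \<le> norm w"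
      by (metis abs_le_square_iff abs_norm_cancel)+
    then have "\<bar>x1\<bar> \<le> r" "\<bar>x2\<bar> \<le> r" "\<bar>x3\<bar> \<le> r" "\<bar>x4\<bar> \<le> r"
      using \<open>norm w < r\<close> by linarith+
    then have "lyap_form_deriv p a q mv \<epsilon> \<beta> w (rel_field p q a mh mv g w)
                 \<le> - (\<epsilon> * p / 64) * (x1\<^sup>2 + x2\<^sup>2 + x3\<^sup>2 + x4\<^sup>2) - \<beta> * mh * z\<^sup>2"
      unfolding w using assms \<open>0 < \<epsilon>\<close> \<open>0 < \<beta>\<close> \<epsilon>_small \<beta>_small
      by (intro lyap_form_deriv_rel_field_le[where r = r]) (simp_all add: K_def r_def)
    also have "\<dots> \<le> - c * (norm w)\<^sup>2"
    proof -
      have "c * (x1\<^sup>2 + x2\<^sup>2 + x3\<^sup>2 + x4\<^sup>2) \<le> (\<epsilon> * p / 64) * (x1\<^sup>2 + x2\<^sup>2 + x3\<^sup>2 + x4\<^sup>2)"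
        "c * z\<^sup>2 \<le> (\<beta> * mh) * z\<^sup>2"
        by (intro mult_right_mono; simp add: c_def)+
      then show ?thesis
        by (simp add: w power2_norm_state algebra_simps)
    qed
    finally show "lyap_form_deriv p a q mv \<epsilon> \<beta> w (rel_field p q a mh mv g w)
                    \<le> - c * (norm w)\<^sup>2" .
  qed
qed

lemma quadratic_Lyapunov_coords_imp_loc_asym_stable:
  fixes f :: "'a::real_normed_vector \<Rightarrow> 'a" and \<phi> :: "'a \<Rightarrow> 'b::real_normed_vector"
    and Q :: "'b \<Rightarrow> real"
  assumes "f e = 0"
    and \<phi>_deriv: "\<And>y. (\<phi> has_derivative \<phi>') (at y)"
    and Q_deriv: "\<And>w. (Q has_derivative DQ w) (at w)"
    and \<phi>_lower: "\<And>y. kl * (norm (\<phi> y))\<^sup>2 \<le> (dist y e)\<^sup>2"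
    and \<phi>_upper: "\<And>y. (dist y e)\<^sup>2 \<le> kh * (norm (\<phi> y))\<^sup>2"
    and Q_lower: "\<And>w. m * (norm w)\<^sup>2 \<le> Q w"
    and Q_upper: "\<And>w. Q w \<le> M * (norm w)\<^sup>2"
    and decr: "\<And>y. norm (\<phi> y) < r \<Longrightarrow> DQ (\<phi> y) (\<phi>' (f y)) \<le> - c * (norm (\<phi> y))\<^sup>2"
    and "0 < kl" "0 < kh" "0 < m" "0 < M" "0 < r" "0 < c"
  shows "loc_asym_stable f e"
proof -
  define V where "V y = Q (\<phi> y)" for y
  define DV where "DV y h = DQ (\<phi> y) (\<phi>' h)" for y h
  have V_deriv: "(V has_derivative DV y) (at y)" for y
    unfolding V_def[abs_def] DV_def by (rule has_derivative_compose[OF \<phi>_deriv Q_deriv])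
  show ?thesis
  proof (rule quadratic_Lyapunov_imp_loc_asym_stable
      [where f = f and e = e and V = V and DV = DV, OF \<open>f e = 0\<close> V_deriv])
    show "m / kh * (dist y e)\<^sup>2 \<le> V y" for y
      using mult_left_mono[OF \<phi>_upper[of y], of "m / kh"] Q_lower[of "\<phi> y"] \<open>0 < m\<close> \<open>0 < kh\<close>
      by (simp add: V_def)
    show "V y \<le> M / kl * (dist y e)\<^sup>2" for y
      using mult_left_mono[OF \<phi>_lower[of y], of "M / kl"] Q_upper[of "\<phi> y"] \<open>0 < M\<close> \<open>0 < kl\<close>
      by (simp add: V_def)
    show "DV y (f y) \<le> - (c / M) * V y" if "dist y e < r * sqrt kl" for y
    proof -
      have "(dist y e)\<^sup>2 < (r * sqrt kl)\<^sup>2"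
        using that by (intro power_strict_mono) auto
      moreover have "(r * sqrt kl)\<^sup>2 = kl * r\<^sup>2"
        using \<open>0 < kl\<close> by (simp add: power_mult_distrib)
      ultimately have "kl * (norm (\<phi> y))\<^sup>2 < kl * r\<^sup>2"
        using \<phi>_lower[of y] by linarith
      then have "norm (\<phi> y) < r"
        using \<open>0 < kl\<close> \<open>0 < r\<close> by (simp add: power_less_imp_less_base)
      then have "DV y (f y) \<le> - c * (norm (\<phi> y))\<^sup>2"
        unfolding DV_def by (rule decr)
      also have "\<dots> \<le> - (c / M) * V y"
        using mult_left_mono[OF Q_upper[of "\<phi> y"], of "c / M"] \<open>0 < c\<close> \<open>0 < M\<close>
        by (simp add: V_def)
      finally show ?thesis .
    qed
  qed (use \<open>0 < m\<close> \<open>0 < M\<close> \<open>0 < kl\<close> \<open>0 < kh\<close> \<open>0 < r\<close> \<open>0 < c\<close> in auto)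
qed

lemma loc_asym_stable_infected_equilibrium:
  assumes "0 < muh" "0 < muv" "0 \<le> dl" "0 \<le> r1" "0 < Ih"
    and nonneg: "nonneg_state (Sh, Ih, Rh, Sv, Iv)"
    and eq: "malaria_field Lh Lv muh muv bh bv dl r1 (Sh, Ih, Rh, Sv, Iv) = 0"
  shows "loc_asym_stable (malaria_field Lh Lv muh muv bh bv dl r1) (Sh, Ih, Rh, Sv, Iv)"
proof -
  define p q a g where "p = bv * Iv" and "q = bh * Ih" and "a = muh + dl + r1" and "g = r1 * Ih"
  have pos: "0 < Sh" "0 < Sv" "0 < Iv"
    using infected_equilibrium_pos[OF assms(1,3,4,2,5) nonneg eq] by simp_all
  have "0 < a"
    using assms by (simp add: a_def add_pos_nonneg)
  moreover have "p * Sh = a * Ih" "q * Sv = muv * Iv"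
    using eq by (simp_all add: malaria_field_eq_0_iff p_def q_def a_def ac_simps)
  ultimately have "0 < p * Sh" "0 < q * Sv"
    using pos assms by simp_all
  then have "0 < p" "0 < q"
    using pos by (simp_all add: zero_less_mult_iff)
  obtain \<epsilon> \<beta> r c where "0 < \<epsilon>" "\<epsilon> \<le> 1 / p" "\<epsilon> \<le> 1 / muv" "0 < \<beta>" "0 < r" "0 < c"
    and decr: "\<And>w. norm w < r \<Longrightarrow>
                 lyap_form_deriv p a q muv \<epsilon> \<beta> w (rel_field p q a muh muv g w) \<le> - c * (norm w)\<^sup>2"
    using lyap_form_decreases_near_0[OF \<open>0 < p\<close> \<open>0 < q\<close> \<open>0 < a\<close> \<open>0 < muh\<close> \<open>0 < muv\<close>]
    by blast
  obtain m M where "0 < m" "0 < M"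
    and Q_lower: "\<And>w. m * (norm w)\<^sup>2 \<le> lyap_form p a q muv \<epsilon> \<beta> w"
    and Q_upper: "\<And>w. lyap_form p a q muv \<epsilon> \<beta> w \<le> M * (norm w)\<^sup>2"
    using lyap_form_bounds[OF \<open>0 < p\<close> \<open>0 < a\<close> \<open>0 < q\<close> \<open>0 < muv\<close> \<open>0 < \<beta>\<close>
        less_imp_le[OF \<open>0 < \<epsilon>\<close>] \<open>\<epsilon> \<le> 1 / p\<close> \<open>\<epsilon> \<le> 1 / muv\<close>]
    by blast
  obtain kl kh where "0 < kl" "0 < kh"
    and dist_lower: "\<And>y. kl * (norm (rel_coords (Sh, Ih, Rh, Sv, Iv) y))\<^sup>2
                              \<le> (dist y (Sh, Ih, Rh, Sv, Iv))\<^sup>2"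
    and dist_upper: "\<And>y. (dist y (Sh, Ih, Rh, Sv, Iv))\<^sup>2
                              \<le> kh * (norm (rel_coords (Sh, Ih, Rh, Sv, Iv) y))\<^sup>2"
    using rel_coords_dist_bounds[OF pos(1) \<open>0 < Ih\<close> pos(2,3)] by blast
  have Q_decr: "lyap_form_deriv p a q muv \<epsilon> \<beta> (rel_coords (Sh, Ih, Rh, Sv, Iv) y)
                   (rel_scale (Sh, Ih, Rh, Sv, Iv) (malaria_field Lh Lv muh muv bh bv dl r1 y))
                 \<le> - c * (norm (rel_coords (Sh, Ih, Rh, Sv, Iv) y))\<^sup>2"
    if "norm (rel_coords (Sh, Ih, Rh, Sv, Iv) y) < r" for y
    using decr[OF that] rel_scale_malaria_field[OF pos(1) \<open>0 < Ih\<close> pos(2,3) eq, of y]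
    by (simp add: p_def q_def a_def g_def)
  show ?thesis
    by (rule quadratic_Lyapunov_coords_imp_loc_asym_stable[where r = r,
          OF eq rel_coords_has_derivative lyap_form_has_derivative
          dist_lower dist_upper Q_lower Q_upper Q_decr])
      (use \<open>0 < kl\<close> \<open>0 < kh\<close> \<open>0 < m\<close> \<open>0 < M\<close> \<open>0 < r\<close> \<open>0 < c\<close> in auto)
qed

theorem theorem3p19:
  fixes Lh Lv muh muv bh bv dl r1 :: real
  assumes "Lh > 0" "Lv > 0" "muh > 0" "muv > 0"
    and "bh \<ge> 0" "bv \<ge> 0" "dl \<ge> 0" "r1 \<ge> 0"
    and "R0 Lh Lv muh muv bh bv dl r1 > 1"
  shows "\<exists>E. (nonneg_state E \<and> malaria_field Lh Lv muh muv bh bv dl r1 E = 0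
                \<and> E \<noteq> disease_free_eq Lh Lv muh muv)
           \<and> (\<forall>E'. nonneg_state E' \<and> malaria_field Lh Lv muh muv bh bv dl r1 E' = 0
                \<and> E' \<noteq> disease_free_eq Lh Lv muh muv \<longrightarrow> E' = E)
           \<and> loc_asym_stable (malaria_field Lh Lv muh muv bh bv dl r1) E"
proof (rule ex1E[OF endemic_equilibrium_ex1[OF assms]])
  fix E
  assume E: "nonneg_state E \<and> malaria_field Lh Lv muh muv bh bv dl r1 E = 0
               \<and> E \<noteq> disease_free_eq Lh Lv muh muv"
    and unique: "\<forall>E'. nonneg_state E' \<and> malaria_field Lh Lv muh muv bh bv dl r1 E' = 0
                   \<and> E' \<noteq> disease_free_eq Lh Lv muh muv \<longrightarrow> E' = E"
  obtain Sh Ih Rh Sv Iv where E_def: "E = (Sh, Ih, Rh, Sv, Iv)"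
    by (cases E) auto
  with E have nonneg: "nonneg_state (Sh, Ih, Rh, Sv, Iv)"
    and eq: "malaria_field Lh Lv muh muv bh bv dl r1 (Sh, Ih, Rh, Sv, Iv) = 0"
    and "(Sh, Ih, Rh, Sv, Iv) \<noteq> disease_free_eq Lh Lv muh muv"
    by simp_all
  then have "0 < Ih"
    by (rule nonneg_equilibrium_infected[OF assms(3,4)])
  then have "loc_asym_stable (malaria_field Lh Lv muh muv bh bv dl r1) E"
    unfolding E_def by (rule loc_asym_stable_infected_equilibrium[OF assms(3,4,7,8) _ nonneg eq])
  with E unique show ?thesis
    by blast
qed

end
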